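(* For every $N$, there exists a map $f:\mathcal D_N\to\{0,1\}$ that is the restriction to $\mathcal D_N$ of a linear function on $\mathbb R^N$, such that every function $\bar f:\{0,1\}^N\to\{0,1\}$ agreeing with $f$ on $\mathcal D_N$ has degree at least $\Omega(\log N)$.
   Context: $\mathcal D_N=\{e_1,\dots,e_N\}\subseteq\{0,1\}^N$ is the set of standard basis vectors. The degree of a Boolean function $\bar f:\{0,1\}^N\to\{0,1\}$ is the degree of its unique multilinear polynomial representation. *)

theory Defs
  imports Complex_Main
begin

text \<open>Points of R^N are modelled as functions nat => real vanishing at indices >= N.\<close>

definition cube :: "nat \<Rightarrow> (nat \<Rightarrow> real) set" where
  "cube N = {x. (\<forall>i<N. x i = 0 \<or> x i = 1) \<and> (\<forall>i\<ge>N. x i = 0)}"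

definition basis_vec :: "nat \<Rightarrow> (nat \<Rightarrow> real)" where
  "basis_vec i = (\<lambda>j. if j = i then 1 else 0)"

text \<open>D_N = {e_1, ..., e_N} (indices 0..N-1).\<close>
definition DN :: "nat \<Rightarrow> (nat \<Rightarrow> real) set" where
  "DN N = basis_vec ` {..<N}"

definition multilinear_degree_le :: "nat \<Rightarrow> ((nat \<Rightarrow> real) \<Rightarrow> real) \<Rightarrow> nat \<Rightarrow> bool" where
  "multilinear_degree_le N F d \<longleftrightarrow>
     (\<exists>c :: nat set \<Rightarrow> real.
        (\<forall>S. c S \<noteq> 0 \<longrightarrow> S \<subseteq> {..<N} \<and> card S \<le> d) \<and>
        (\<forall>x\<in>cube N. F x = (\<Sum>S\<in>Pow {..<N}. c S * (\<Prod>i\<in>S. x i))))"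

text \<open>Degree of a Boolean function on {0,1}^N = degree of its (unique) multilinear
  representation = least d admitting a multilinear representation of degree \<le> d.\<close>
definition bool_degree :: "nat \<Rightarrow> ((nat \<Rightarrow> real) \<Rightarrow> real) \<Rightarrow> nat" where
  "bool_degree N F = (LEAST d. multilinear_degree_le N F d)"

end

theory Submission
  imports Defs "HOL-Computational_Algebra.Polynomial" "HOL-Library.Indicator_Function"
begin

text \<open>
  Let \<open>f\<close> be the indicator of the first half of the coordinates. Whatever the value
  \<open>F 0 \<in> {0, 1}\<close> of a Boolean extension \<open>F\<close> of degree \<open>d\<close>, it differs from \<open>F e\<^sub>i\<close> for all \<open>i\<close>
  in a set \<open>K\<close> of at least \<open>N/2\<close> coordinates. Averaging \<open>F\<close> over the subsets of \<open>K\<close> of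
  size \<open>t\<close> (Minsky--Papert symmetrization) yields a univariate polynomial \<open>Q\<close> of degree
  at most \<open>d\<close> with \<open>Q 0, \<dots>, Q |K| \<in> [0, 1]\<close> and \<open>|Q 1 - Q 0| = 1\<close>. Lagrange interpolation
  of \<open>Q - Q 0\<close> at the nodes \<open>0, h, \<dots>, d h\<close> with \<open>h = |K| div d\<close> bounds
  \<open>|Q 1 - Q 0|\<close> by \<open>2\<^sup>d / h\<close>, so \<open>|K| < 4\<^sup>d\<close> and hence \<open>N \<le> 8\<^sup>d\<close>.
\<close>

section \<open>Polynomials bounded on an arithmetic progression\<close>

lemma lagrange_interpolation:
  fixes p :: "'a::field poly" and xs :: "nat \<Rightarrow> 'a"
  assumes deg: "degree p \<le> d" and inj: "inj_on xs {..d}"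
  shows "poly p y = (\<Sum>j\<le>d. poly p (xs j) * (\<Prod>i\<in>{..d}-{j}. (y - xs i) / (xs j - xs i)))"
proof -
  define L where "L j = (\<Prod>i\<in>{..d}-{j}. [:- xs i / (xs j - xs i), 1 / (xs j - xs i):])" for j
  have poly_L: "poly (L j) z = (\<Prod>i\<in>{..d}-{j}. (z - xs i) / (xs j - xs i))" for j z
    unfolding L_def poly_prod by (intro prod.cong refl) (simp add: diff_divide_distrib)
  have degree_L: "degree (L j) \<le> d" if "j \<le> d" for j
  proof -
    have "degree (L j) \<le> sum (degree \<circ> (\<lambda>i. [:- xs i / (xs j - xs i), 1 / (xs j - xs i):])) ({..d}-{j})"
      unfolding L_def by (rule degree_prod_sum_le) auto
    also have "\<dots> \<le> (\<Sum>i\<in>{..d}-{j}. 1)"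
      by (intro sum_mono) auto
    finally show ?thesis using that by simp
  qed
  have L_at_nodes: "poly (L j) (xs m) = of_bool (j = m)" if "j \<le> d" "m \<le> d" for j m
  proof (cases "j = m")
    case True
    have "poly (L j) (xs m) = (\<Prod>i\<in>{..d}-{j}. 1)"
      unfolding poly_L True using inj that by (intro prod.cong refl) (auto simp: inj_on_def)
    then show ?thesis using True by simp
  next
    case False
    then have "m \<in> {..d}-{j}" using that by auto
    then show ?thesis unfolding poly_L using False by (simp add: prod_zero_iff bexI[of _ m])
  qed
  define r where "r = (\<Sum>j\<le>d. smult (poly p (xs j)) (L j))"
  have "p = r"
  proof (rule poly_eqI_degree[where A = "xs ` {..d}"])
    fix x assume "x \<in> xs ` {..d}"
    then obtain m where m: "m \<le> d" "x = xs m" by auto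
    have "poly r x = (\<Sum>j\<le>d. poly p (xs j) * of_bool (j = m))"
      unfolding r_def poly_sum poly_smult m(2) by (intro sum.cong refl) (simp add: L_at_nodes m(1))
    then show "poly p x = poly r x" using m by simp
  next
    have "card (xs ` {..d}) = Suc d" using inj by (simp add: card_image)
    moreover have "degree r \<le> d"
      unfolding r_def by (intro degree_sum_le) (auto intro: order.trans[OF degree_smult_le] degree_L)
    ultimately show "degree p < card (xs ` {..d})" "degree r < card (xs ` {..d})" using deg by auto
  qed
  then have "poly p y = poly r y" by simp
  then show ?thesis unfolding r_def poly_sum poly_smult poly_L .
qed

lemma prod_abs_diff_of_nat_eq_fact:
  assumes "j \<le> d"
  shows "(\<Prod>i\<in>{..d}-{j}. \<bar>real j - real i\<bar>) = fact j * fact (d - j)"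
  using assms
proof (induction d rule: dec_induct)
  case base
  have "(\<Prod>i\<in>{..j}-{j}. \<bar>real j - real i\<bar>) = (\<Prod>i<j. real (j - i))"
    by (intro prod.cong) (auto simp: of_nat_diff)
  also have "\<dots> = fact j" unfolding fact_prod_rev[of j] by (simp add: atLeast0LessThan)
  finally show ?case by simp
next
  case (step n)
  have "{..Suc n}-{j} = insert (Suc n) ({..n}-{j})" using step by auto
  then have "(\<Prod>i\<in>{..Suc n}-{j}. \<bar>real j - real i\<bar>) = real (Suc n - j) * (\<Prod>i\<in>{..n}-{j}. \<bar>real j - real i\<bar>)"
    using step by (simp add: of_nat_diff)
  also have "\<dots> = fact j * fact (Suc n - j)"
    using step by (simp add: Suc_diff_le)
  finally show ?case .
qed

lemma prod_remove_eq_fact_div: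
  assumes "1 \<le> j" "j \<le> d"
  shows "(\<Prod>i\<in>{1..d}-{j}. real i) = fact d / real j"
proof -
  have "fact d = (\<Prod>i\<in>{1..d}. real i)" by (simp add: fact_prod)
  also have "\<dots> = real j * (\<Prod>i\<in>{1..d}-{j}. real i)"
    using assms by (subst prod.remove[of _ j]) auto
  finally show ?thesis using assms by simp
qed

lemma abs_lagrange_basis_at_one_le:
  fixes h :: real
  assumes h: "1 \<le> h" and j: "1 \<le> j" "j \<le> d"
  shows "\<bar>\<Prod>i\<in>{..d}-{j}. (1 - real i * h) / (real j * h - real i * h)\<bar> \<le> real (d choose j) / h"
proof -
  have numerator: "(\<Prod>i\<in>{..d}-{j}. \<bar>1 - real i * h\<bar>) \<le> h ^ (d - 1) * (fact d / real j)"
  proof -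
    have "(\<Prod>i\<in>{..d}-{j}. \<bar>1 - real i * h\<bar>) \<le> (\<Prod>i\<in>{..d}-{j}. if i = 0 then 1 else real i * h)"
    proof (intro prod_mono conjI)
      fix i
      have "1 \<le> real i * h" if "i \<noteq> 0" using h that by (intro mult_ge1_I) auto
      then show "\<bar>1 - real i * h\<bar> \<le> (if i = 0 then 1 else real i * h)" by auto
    qed simp
    also have "{..d}-{j} = insert 0 ({1..d}-{j})" using j by auto
    then have "(\<Prod>i\<in>{..d}-{j}. if i = 0 then 1 else real i * h) = (\<Prod>i\<in>{1..d}-{j}. real i * h)"
      by (auto intro!: prod.cong)
    also have "\<dots> = h ^ (d - 1) * (fact d / real j)"
      using prod_remove_eq_fact_div[OF j] j by (simp add: prod.distrib mult.commute)
    finally show ?thesis .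
  qed
  have "(\<Prod>i\<in>{..d}-{j}. \<bar>real j * h - real i * h\<bar>) = (\<Prod>i\<in>{..d}-{j}. h * \<bar>real j - real i\<bar>)"
    using h by (intro prod.cong refl) (simp add: left_diff_distrib[symmetric] abs_mult)
  also have "\<dots> = h ^ d * (fact j * fact (d - j))"
    using j by (simp add: prod.distrib prod_abs_diff_of_nat_eq_fact)
  finally have denominator: "(\<Prod>i\<in>{..d}-{j}. \<bar>real j * h - real i * h\<bar>) = h ^ d * (fact j * fact (d - j))" .
  have "\<bar>\<Prod>i\<in>{..d}-{j}. (1 - real i * h) / (real j * h - real i * h)\<bar>
      \<le> h ^ (d - 1) * (fact d / real j) / (h ^ d * (fact j * fact (d - j)))"
    unfolding abs_prod prod_dividef abs_divide denominator using h by (intro divide_right_mono numerator) simp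
  also have "\<dots> = real (d choose j) / (real j * h)"
    using h j by (cases d) (auto simp: binomial_fact field_simps)
  also have "\<dots> \<le> real (d choose j) / h"
    using j h by (intro divide_left_mono) auto
  finally show ?thesis .
qed

lemma poly_unit_jump_imp_le_two_pow:
  fixes p :: "real poly" and h :: real
  assumes deg: "degree p \<le> d" and h: "1 \<le> h"
    and bounded: "\<And>j. j \<le> d \<Longrightarrow> poly p (real j * h) \<in> {0..1}"
    and jump: "\<bar>poly p 1 - poly p 0\<bar> = 1"
  shows "h \<le> 2 ^ d"
proof -
  define q where "q = p - [:poly p 0:]"
  define L where "L j = (\<Prod>i\<in>{..d}-{j}. (1 - real i * h) / (real j * h - real i * h))" for j
  have "degree q \<le> d" unfolding q_def using deg by (intro degree_diff_le) auto
  moreover have "inj_on (\<lambda>i. real i * h) {..d}" using h by (auto simp: inj_on_def)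
  ultimately have "poly q 1 = (\<Sum>j\<le>d. poly q (real j * h) * L j)"
    unfolding L_def by (rule lagrange_interpolation)
  then have "1 \<le> (\<Sum>j\<le>d. \<bar>poly q (real j * h)\<bar> * \<bar>L j\<bar>)"
    using jump sum_abs[of "\<lambda>j. poly q (real j * h) * L j" "{..d}"] by (simp add: q_def abs_mult)
  also have "\<dots> \<le> (\<Sum>j\<le>d. real (d choose j) / h)"
  proof (intro sum_mono)
    fix j assume "j \<in> {..d}"
    show "\<bar>poly q (real j * h)\<bar> * \<bar>L j\<bar> \<le> real (d choose j) / h"
    proof (cases "j = 0")
      case False
      have "\<bar>poly q (real j * h)\<bar> \<le> 1"
        using bounded[of j] bounded[of 0] \<open>j \<in> {..d}\<close> by (auto simp: q_def)
      moreover have "\<bar>L j\<bar> \<le> real (d choose j) / h"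
        unfolding L_def using False \<open>j \<in> {..d}\<close> by (intro abs_lagrange_basis_at_one_le h) auto
      ultimately show ?thesis by (metis abs_ge_zero mult_1 mult_mono zero_le_one)
    qed (use h in \<open>simp add: q_def\<close>)
  qed
  also have "\<dots> = 2 ^ d / h"
    unfolding sum_divide_distrib[symmetric] by (metis choose_row_sum of_nat_numeral of_nat_power of_nat_sum)
  finally show ?thesis using h by (simp add: field_simps)
qed

lemma poly_unit_jump_range_lt_four_pow:
  fixes p :: "real poly"
  assumes deg: "degree p \<le> d"
    and bounded: "\<And>t. t \<le> k \<Longrightarrow> poly p (real t) \<in> {0..1}"
    and jump: "\<bar>poly p 1 - poly p 0\<bar> = 1"
  shows "k < 4 ^ d"
proof -
  have "d \<noteq> 0"
  proof
    assume "d = 0"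
    then obtain a where "p = [:a:]" using deg by (auto elim: degree_eq_zeroE)
    then show False using jump by simp
  qed
  define h where "h = k div d"
  have "h \<le> 2 ^ d"
  proof (cases "h = 0")
    case False
    have "poly p (real j * real h) \<in> {0..1}" if "j \<le> d" for j
    proof -
      have "j * h \<le> d * h" using that by simp
      also have "\<dots> \<le> k" by (simp add: h_def)
      finally show ?thesis using bounded[of "j * h"] by simp
    qed
    with False have "real h \<le> 2 ^ d" by (intro poly_unit_jump_imp_le_two_pow[OF deg _ _ jump]) auto
    then show ?thesis by (simp flip: of_nat_le_iff)
  qed simp
  have "k = d * h + k mod d" by (simp add: h_def)
  moreover have "k mod d < d" using \<open>d \<noteq> 0\<close> by simp
  ultimately have "k < d * (h + 1)" by (simp add: distrib_left)
  also have "\<dots> \<le> d * (2 ^ d + 1)" using \<open>h \<le> 2 ^ d\<close> by simp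
  also have "\<dots> < (d + 1) * 2 ^ d" using less_exp[of d] by (simp add: distrib_left distrib_right)
  also have "\<dots> \<le> 2 ^ d * 2 ^ d" using less_exp[of d] by (intro mult_right_mono) (simp_all add: Suc_le_eq)
  also have "\<dots> = 4 ^ d" by (simp flip: power_mult_distrib)
  finally show ?thesis .
qed

section \<open>Multilinear representations on the cube\<close>

lemma prod_indicator_eq:
  "finite S \<Longrightarrow> (\<Prod>i\<in>S. indicator T i) = (if S \<subseteq> T then 1 else (0::'a::comm_semiring_1))"
  by (induction S rule: finite_induct) auto

lemma indicator_empty_eq_zero [simp]: "indicator {} = (\<lambda>_. 0)"
  by (simp add: fun_eq_iff)

lemma basis_vec_eq_indicator: "basis_vec i = indicator {i}"
  by (auto simp: basis_vec_def indicator_def)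

lemma indicator_in_cube: "T \<subseteq> {..<N} \<Longrightarrow> indicator T \<in> cube N"
  by (auto simp: cube_def indicator_def)

lemma cube_eq_indicator: "x \<in> cube N \<Longrightarrow> x = indicator {i. i < N \<and> x i = 1}"
  unfolding cube_def indicator_def by (rule ext) (auto, metis not_le)

lemma sum_monomials_indicator:
  fixes N :: nat
  assumes "T \<subseteq> {..<N}"
  shows "(\<Sum>S\<in>Pow {..<N}. c S * (\<Prod>i\<in>S. indicator T i)) = (\<Sum>S\<in>Pow T. c S :: real)"
proof -
  have "(\<Prod>i\<in>S. indicator T i) = (if S \<subseteq> T then 1 else 0 :: real)" if "S \<in> Pow {..<N}" for S
    using that by (intro prod_indicator_eq) (auto intro: finite_subset)
  then have "(\<Sum>S\<in>Pow {..<N}. c S * (\<Prod>i\<in>S. indicator T i)) = (\<Sum>S\<in>Pow {..<N}. if S \<subseteq> T then c S else 0)"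
    by (intro sum.cong) auto
  also have "\<dots> = (\<Sum>S\<in>{S\<in>Pow {..<N}. S \<subseteq> T}. c S)"
    by (rule sum.inter_filter[symmetric]) simp
  also have "{S\<in>Pow {..<N}. S \<subseteq> T} = Pow T" using assms by auto
  finally show ?thesis .
qed

lemma multilinear_degree_le_dimension: "multilinear_degree_le N F N"
proof -
  define g where "g S = (\<Sum>T\<in>Pow S. (-1) ^ card T * F (indicator T))" for S
  define c where "c S = (if S \<subseteq> {..<N} then (-1) ^ card S * g S else 0)" for S
  have "F x = (\<Sum>S\<in>Pow {..<N}. c S * (\<Prod>i\<in>S. x i))" if x: "x \<in> cube N" for x
  proof -
    define A where "A = {i. i < N \<and> x i = 1}"
    then have A: "A \<subseteq> {..<N}" "finite A" by (auto intro: rev_finite_subset[OF finite_lessThan])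
    have x_eq: "x = indicator A" unfolding A_def by (rule cube_eq_indicator[OF x])
    have "F (indicator A) = (\<Sum>T\<in>Pow A. (-1) ^ card T * g T)"
      by (rule inclusion_exclusion_symmetric) (simp_all add: g_def A)
    also have "\<dots> = (\<Sum>T\<in>Pow A. c T)"
      using A by (intro sum.cong refl) (auto simp: c_def)
    also have "\<dots> = (\<Sum>S\<in>Pow {..<N}. c S * (\<Prod>i\<in>S. indicator A i))"
      by (rule sum_monomials_indicator[symmetric, OF A(1)])
    finally show ?thesis unfolding x_eq .
  qed
  moreover have "S \<subseteq> {..<N} \<and> card S \<le> N" if "c S \<noteq> 0" for S
    using that card_mono[of "{..<N}" S] by (auto simp: c_def split: if_splits)
  ultimately show ?thesis unfolding multilinear_degree_le_def by blast
qed

lemma multilinear_degree_le_bool_degree: "multilinear_degree_le N F (bool_degree N F)"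
  unfolding bool_degree_def by (rule LeastI[OF multilinear_degree_le_dimension])

section \<open>Symmetrization\<close>

lemma card_subsets_containing:
  assumes K: "finite K" and SK: "S \<subseteq> K"
  shows "card {T. T \<subseteq> K \<and> card T = t \<and> S \<subseteq> T} =
         (if card S \<le> t then (card K - card S) choose (t - card S) else 0)"
proof (cases "card S \<le> t")
  case True
  have "finite S" using K SK by (rule finite_subset[rotated])
  have "bij_betw (\<lambda>U. U \<union> S) {U. U \<subseteq> K - S \<and> card U = t - card S} {T. T \<subseteq> K \<and> card T = t \<and> S \<subseteq> T}"
  proof (rule bij_betw_byWitness[where f' = "\<lambda>T. T - S"])
    show "(\<lambda>U. U \<union> S) ` {U. U \<subseteq> K - S \<and> card U = t - card S} \<subseteq> {T. T \<subseteq> K \<and> card T = t \<and> S \<subseteq> T}"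
    proof (intro image_subsetI)
      fix U assume U: "U \<in> {U. U \<subseteq> K - S \<and> card U = t - card S}"
      then have "finite U" using K by (auto intro: finite_subset)
      then have "card (U \<union> S) = card U + card S" using U \<open>finite S\<close> by (intro card_Un_disjoint) auto
      then show "U \<union> S \<in> {T. T \<subseteq> K \<and> card T = t \<and> S \<subseteq> T}" using U True SK by auto
    qed
    show "(\<lambda>T. T - S) ` {T. T \<subseteq> K \<and> card T = t \<and> S \<subseteq> T} \<subseteq> {U. U \<subseteq> K - S \<and> card U = t - card S}"
      using \<open>finite S\<close> by (auto simp: card_Diff_subset)
  qed auto
  then have "card {T. T \<subseteq> K \<and> card T = t \<and> S \<subseteq> T} = card (K - S) choose (t - card S)"
    using K by (simp add: bij_betw_same_card[symmetric] n_subsets)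
  then show ?thesis using True SK \<open>finite S\<close> by (simp add: card_Diff_subset)
next
  case False
  have "{T. T \<subseteq> K \<and> card T = t \<and> S \<subseteq> T} = {}"
    using False K by (auto dest: card_mono[OF finite_subset])
  then show ?thesis using False by (simp only: card.empty) simp
qed

definition binomial_poly :: "nat \<Rightarrow> 'a::field_char_0 poly" where
  "binomial_poly s = smult (1 / fact s) (\<Prod>i<s. [:- of_nat i, 1:])"

lemma poly_binomial_poly: "poly (binomial_poly s) x = x gchoose s"
  by (simp add: binomial_poly_def poly_prod gbinomial_prod_rev atLeast0LessThan)

lemma degree_binomial_poly_le: "degree (binomial_poly s) \<le> s"
proof -
  have "degree (\<Prod>i<s. [:- of_nat i, 1:] :: 'a poly) \<le> sum (degree \<circ> (\<lambda>i. [:- of_nat i, 1:] :: 'a poly)) {..<s}"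
    by (rule degree_prod_sum_le) auto
  then show ?thesis unfolding binomial_poly_def by (simp add: order.trans[OF degree_smult_le])
qed

lemma choose_ratio_eq:
  assumes "s \<le> t" "t \<le> k"
  shows "real (t choose s) / real (k choose s) = real ((k - s) choose (t - s)) / real (k choose t)"
proof -
  have "real (k choose t) * real (t choose s) = real (k choose s) * real ((k - s) choose (t - s))"
    using choose_mult[OF assms] by (metis of_nat_mult)
  moreover have "0 < k choose s" "0 < k choose t" using assms by simp_all
  ultimately show ?thesis by (simp add: field_simps)
qed

lemma sum_card_subsets_multilinear:
  fixes N :: nat
  assumes rep: "\<forall>x\<in>cube N. F x = (\<Sum>S\<in>Pow {..<N}. c S * (\<Prod>i\<in>S. x i))" and KN: "K \<subseteq> {..<N}"
  shows "(\<Sum>T | T \<subseteq> K \<and> card T = t. F (indicator T))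
       = (\<Sum>S\<in>Pow K. c S * real (card {T. T \<subseteq> K \<and> card T = t \<and> S \<subseteq> T}))"
proof -
  have "finite K" using KN by (rule finite_subset) simp
  have "F (indicator T) = (\<Sum>S\<in>Pow K. if S \<subseteq> T then c S else 0)" if "T \<subseteq> K" for T
  proof -
    have "F (indicator T) = (\<Sum>S\<in>Pow T. c S)"
      using rep indicator_in_cube[of T N] sum_monomials_indicator[of T N c] that KN by auto
    also have "Pow T = {S\<in>Pow K. S \<subseteq> T}" using that by auto
    also have "(\<Sum>S\<in>{S\<in>Pow K. S \<subseteq> T}. c S) = (\<Sum>S\<in>Pow K. if S \<subseteq> T then c S else 0)"
      using \<open>finite K\<close> by (intro sum.inter_filter) simp
    finally show ?thesis .
  qed
  then have "(\<Sum>T | T \<subseteq> K \<and> card T = t. F (indicator T))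
      = (\<Sum>T | T \<subseteq> K \<and> card T = t. \<Sum>S\<in>Pow K. if S \<subseteq> T then c S else 0)"
    by (intro sum.cong) auto
  also have "\<dots> = (\<Sum>S\<in>Pow K. \<Sum>T | T \<subseteq> K \<and> card T = t. if S \<subseteq> T then c S else 0)"
    by (rule sum.swap)
  also have "\<dots> = (\<Sum>S\<in>Pow K. c S * real (card {T. T \<subseteq> K \<and> card T = t \<and> S \<subseteq> T}))"
    using \<open>finite K\<close> by (intro sum.cong refl) (simp add: sum.If_cases Int_def conj_assoc)
  finally show ?thesis .
qed

lemma symmetrization:
  fixes F :: "(nat \<Rightarrow> real) \<Rightarrow> real"
  assumes "multilinear_degree_le N F d" and KN: "K \<subseteq> {..<N}"
  obtains Q :: "real poly" where "degree Q \<le> d"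
    and "\<And>t. t \<le> card K \<Longrightarrow>
           poly Q (real t) = (\<Sum>T | T \<subseteq> K \<and> card T = t. F (indicator T)) / real (card K choose t)"
proof -
  obtain c where supp: "\<forall>S. c S \<noteq> 0 \<longrightarrow> S \<subseteq> {..<N} \<and> card S \<le> d"
    and rep: "\<forall>x\<in>cube N. F x = (\<Sum>S\<in>Pow {..<N}. c S * (\<Prod>i\<in>S. x i))"
    using assms(1) unfolding multilinear_degree_le_def by blast
  have "finite K" using KN by (rule finite_subset) simp
  define Q where "Q = (\<Sum>S\<in>Pow K. smult (c S / real (card K choose card S)) (binomial_poly (card S)))"
  have "degree Q \<le> d"
    unfolding Q_def
  proof (intro degree_sum_le)
    fix S
    show "degree (smult (c S / real (card K choose card S)) (binomial_poly (card S))) \<le> d"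
      using supp degree_binomial_poly_le[of "card S"] by (cases "c S = 0") (auto intro: order.trans)
  qed (simp add: \<open>finite K\<close>)
  moreover have "poly Q (real t) = (\<Sum>T | T \<subseteq> K \<and> card T = t. F (indicator T)) / real (card K choose t)"
    if t: "t \<le> card K" for t
  proof -
    have "poly Q (real t) = (\<Sum>S\<in>Pow K. c S * (real (t choose card S) / real (card K choose card S)))"
      unfolding Q_def poly_sum poly_smult poly_binomial_poly binomial_gbinomial[symmetric] by simp
    also have "\<dots> = (\<Sum>S\<in>Pow K. c S * real (card {T. T \<subseteq> K \<and> card T = t \<and> S \<subseteq> T})) / real (card K choose t)"
      unfolding sum_divide_distrib
    proof (intro sum.cong refl)
      fix S assume "S \<in> Pow K"
      then have card_eq: "card {T. T \<subseteq> K \<and> card T = t \<and> S \<subseteq> T} =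
          (if card S \<le> t then (card K - card S) choose (t - card S) else 0)"
        using \<open>finite K\<close> by (intro card_subsets_containing) auto
      show "c S * (real (t choose card S) / real (card K choose card S))
        = c S * real (card {T. T \<subseteq> K \<and> card T = t \<and> S \<subseteq> T}) / real (card K choose t)"
      proof (cases "card S \<le> t")
        case True
        then show ?thesis unfolding card_eq choose_ratio_eq[OF True t] by simp
      qed (simp add: card_eq)
    qed
    also have "\<dots> = (\<Sum>T | T \<subseteq> K \<and> card T = t. F (indicator T)) / real (card K choose t)"
      by (simp add: sum_card_subsets_multilinear[OF rep KN])
    finally show ?thesis .
  qed
  ultimately show ?thesis by (rule that)
qed

lemma average_in_unit_interval:
  assumes "finite A" "A \<noteq> {}" "\<And>x. x \<in> A \<Longrightarrow> f x \<in> {0..1::real}"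
  shows "sum f A / real (card A) \<in> {0..1}"
proof -
  have "0 \<le> sum f A" "sum f A \<le> real (card A)"
    using assms(3) sum_mono[of A f "\<lambda>_. 1"] by (auto intro: sum_nonneg)
  moreover have "0 < real (card A)" using assms(1,2) by (simp add: card_gt_0_iff)
  ultimately show ?thesis by simp
qed

lemma layer_average_in_unit_interval:
  assumes "finite K" "t \<le> card K" "\<And>T. T \<subseteq> K \<Longrightarrow> f T \<in> {0..1::real}"
  shows "(\<Sum>T | T \<subseteq> K \<and> card T = t. f T) / real (card K choose t) \<in> {0..1}"
proof -
  have card_layer: "card {T. T \<subseteq> K \<and> card T = t} = card K choose t"
    using assms(1) by (rule n_subsets)
  have "{T. T \<subseteq> K \<and> card T = t} \<noteq> {}"
  proof
    assume "{T. T \<subseteq> K \<and> card T = t} = {}"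
    with card_layer have "card K choose t = 0" by simp
    with assms(2) show False by simp
  qed
  then show ?thesis
    using average_in_unit_interval[of "{T. T \<subseteq> K \<and> card T = t}" f] assms(1,3)
    unfolding card_layer by simp
qed

lemma card_sensitive_coords_lt_four_pow:
  fixes F :: "(nat \<Rightarrow> real) \<Rightarrow> real"
  assumes deg: "multilinear_degree_le N F d"
    and bool: "\<forall>x\<in>cube N. F x \<in> {0, 1}"
    and KN: "K \<subseteq> {..<N}"
    and sensitive: "\<And>i. i \<in> K \<Longrightarrow> F (basis_vec i) \<noteq> F (\<lambda>_. 0)"
  shows "card K < 4 ^ d"
proof -
  have "finite K" using KN by (rule finite_subset) simp
  let ?layer = "\<lambda>t. {T. T \<subseteq> K \<and> card T = t}"
  obtain Q :: "real poly" where "degree Q \<le> d" and Q: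
    "\<And>t. t \<le> card K \<Longrightarrow> poly Q (real t) = (\<Sum>T\<in>?layer t. F (indicator T)) / real (card K choose t)"
    using symmetrization[OF deg KN] by blast
  have F_indicator: "F (indicator T) \<in> {0, 1}" if "T \<subseteq> K" for T
    using bool indicator_in_cube[of T N] that KN by auto
  have "poly Q (real t) \<in> {0..1}" if "t \<le> card K" for t
  proof -
    have "F (indicator T) \<in> {0..1}" if "T \<subseteq> K" for T using F_indicator[OF that] by auto
    then show ?thesis unfolding Q[OF that] using \<open>finite K\<close> that by (intro layer_average_in_unit_interval)
  qed
  moreover have "\<bar>poly Q 1 - poly Q 0\<bar> = 1" if "K \<noteq> {}"
  proof -
    have "?layer 0 = {{}}" using \<open>finite K\<close> by (auto dest: finite_subset)
    then have Q0: "poly Q 0 = F (\<lambda>_. 0)" using Q[of 0] by simp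
    have F_basis: "F (basis_vec i) = 1 - F (\<lambda>_. 0)" if "i \<in> K" for i
      using F_indicator[of "{i}"] F_indicator[of "{}"] sensitive[OF that] that
      by (auto simp: basis_vec_eq_indicator)
    have "?layer 1 = (\<lambda>i. {i}) ` K" by (auto simp: card_Suc_eq)
    then have "(\<Sum>T\<in>?layer 1. F (indicator T)) = (\<Sum>i\<in>K. F (basis_vec i))"
      by (simp add: sum.reindex basis_vec_eq_indicator)
    also have "\<dots> = real (card K) * (1 - F (\<lambda>_. 0))" using F_basis by simp
    finally have "poly Q 1 = 1 - F (\<lambda>_. 0)"
      using Q[of 1] that \<open>finite K\<close> by (simp add: Suc_le_eq card_gt_0_iff)
    then show ?thesis using Q0 F_indicator[of "{}"] by auto
  qed
  ultimately show ?thesis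
    using \<open>degree Q \<le> d\<close> by (cases "K = {}") (auto intro: poly_unit_jump_range_lt_four_pow)
qed

lemma sum_mult_basis_vec:
  assumes "j < N"
  shows "(\<Sum>i<N. a i * basis_vec j i) = a j"
proof -
  have "(\<Sum>i<N. a i * basis_vec j i) = (\<Sum>i<N. if i = j then a j else 0)"
    by (intro sum.cong) (auto simp: basis_vec_def)
  then show ?thesis using assms by simp
qed

lemma card_indicator_half_ne:
  fixes b :: real
  assumes "b \<in> {0, 1}"
  shows "N \<le> 2 * card {i\<in>{..<N}. indicator {..<N div 2} i \<noteq> b} + 1"
proof -
  have "{i\<in>{..<N}. indicator {..<N div 2} i \<noteq> b} = (if b = 0 then {..<N div 2} else {N div 2..<N})"
    using assms by (auto simp: indicator_def)
  moreover have "N \<le> 2 * (N div 2) + 1" "N \<le> 2 * (N - N div 2) + 1" by simp_all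
  ultimately show ?thesis by simp
qed

lemma le_eight_pow_of_le_two_mult_Suc:
  fixes N k d :: nat
  assumes "2 \<le> N" "N \<le> 2 * k + 1" "k < 4 ^ d"
  shows "N \<le> 8 ^ d"
proof -
  have "d \<noteq> 0" by (rule ccontr) (use assms in simp)
  then have "2 * 4 ^ d \<le> 2 ^ d * (4::nat) ^ d"
    using power_increasing[of 1 d "2::nat"] by (intro mult_right_mono) auto
  also have "\<dots> = 8 ^ d" by (simp flip: power_mult_distrib)
  finally show ?thesis using assms by simp
qed

lemma le_eight_pow_bool_degree:
  fixes F :: "(nat \<Rightarrow> real) \<Rightarrow> real"
  assumes "2 \<le> N" and bool: "\<forall>x\<in>cube N. F x \<in> {0, 1}"
    and agree: "\<And>j. j < N \<Longrightarrow> F (basis_vec j) = indicator {..<N div 2} j"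
  shows "N \<le> 8 ^ bool_degree N F"
proof -
  define K where "K = {i\<in>{..<N}. F (basis_vec i) \<noteq> F (\<lambda>_. 0)}"
  have "K = {i\<in>{..<N}. indicator {..<N div 2} i \<noteq> F (\<lambda>_. 0)}"
    using agree by (auto simp: K_def)
  moreover have "F (\<lambda>_. 0) \<in> {0, 1}" using bool indicator_in_cube[of "{}" N] by simp
  ultimately have "N \<le> 2 * card K + 1" by (metis card_indicator_half_ne)
  moreover have "card K < 4 ^ bool_degree N F"
    by (rule card_sensitive_coords_lt_four_pow[OF multilinear_degree_le_bool_degree bool]) (auto simp: K_def)
  ultimately show ?thesis using assms(1) by (intro le_eight_pow_of_le_two_mult_Suc)
qed

lemma ln_le_of_le_eight_pow:
  assumes "0 < N" "N \<le> 8 ^ d"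
  shows "ln (real N) \<le> 3 * real d"
proof -
  have "real N \<le> 8 ^ d" using assms(2) by (metis of_nat_le_iff of_nat_numeral of_nat_power)
  then have "ln (real N) \<le> ln (8 ^ d)" using assms(1) by simp
  also have "\<dots> = real d * (3 * ln 2)"
    using ln_realpow[of 2 3] by (simp add: ln_realpow)
  also have "\<dots> \<le> 3 * real d" using mult_left_le[of "ln 2" "real d"] ln_2_less_1 by simp
  finally show ?thesis .
qed

theorem mainTheorem10:
  shows "\<exists>c>0. \<exists>N0. \<forall>N\<ge>N0. \<exists>a :: nat \<Rightarrow> real.
           (\<forall>x\<in>DN N. (\<Sum>i<N. a i * x i) \<in> {0, 1}) \<and>
           (\<forall>F :: (nat \<Rightarrow> real) \<Rightarrow> real.
              (\<forall>x\<in>cube N. F x \<in> {0, 1}) \<longrightarrow>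
              (\<forall>x\<in>DN N. F x = (\<Sum>i<N. a i * x i)) \<longrightarrow>
              real (bool_degree N F) \<ge> c * ln (real N))"
proof (intro exI[of _ "1/3"] conjI exI[of _ 2] allI impI)
  show "(0::real) < 1/3" by simp
  fix N :: nat assume "2 \<le> N"
  define a where "a = (indicator {..<N div 2} :: nat \<Rightarrow> real)"
  show "\<exists>a. (\<forall>x\<in>DN N. (\<Sum>i<N. a i * x i) \<in> {0, 1}) \<and>
      (\<forall>F. (\<forall>x\<in>cube N. F x \<in> {0, 1}) \<longrightarrow> (\<forall>x\<in>DN N. F x = (\<Sum>i<N. a i * x i)) \<longrightarrow>
        1/3 * ln (real N) \<le> real (bool_degree N F))"
  proof (intro exI[of _ a] conjI allI impI)
    have "a i \<in> {0, 1}" for i by (simp add: a_def indicator_def)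
    then show "\<forall>x\<in>DN N. (\<Sum>i<N. a i * x i) \<in> {0, 1}"
      by (auto simp: DN_def sum_mult_basis_vec)
  next
    fix F :: "(nat \<Rightarrow> real) \<Rightarrow> real"
    assume bool: "\<forall>x\<in>cube N. F x \<in> {0, 1}" and agree: "\<forall>x\<in>DN N. F x = (\<Sum>i<N. a i * x i)"
    have "F (basis_vec j) = a j" if "j < N" for j
      using agree that sum_mult_basis_vec[OF that, of a] by (auto simp: DN_def)
    then have "N \<le> 8 ^ bool_degree N F"
      using \<open>2 \<le> N\<close> bool unfolding a_def by (intro le_eight_pow_bool_degree)
    then show "1/3 * ln (real N) \<le> real (bool_degree N F)"
      using ln_le_of_le_eight_pow[of N] \<open>2 \<le> N\<close> by fastforce
  qed
qed

end
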